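(* Let $F_0,\dots,F_{n+1}$ be complete oriented flags in $\mathbb{R}^n$. Then there exist $x_0,\dots,x_{n+1}\in\mathbb{R}^n$ such that $$\mathrm{Or}([F_0,\dots,\widehat{F_i},\dots,\widehat{F_j},\dots,F_{n+1}])=\mathrm{Or}(x_0,\dots,\widehat{x_i},\dots,\widehat{x_j},\dots,x_{n+1})$$ for every $0\le i<j\le n+1$.
   Context: A complete oriented flag $F$ is a chain $\{0\}=F^0\subset F^1\subset\dots\subset F^n=\mathbb{R}^n$ with $\dim F^i=i$, each $F^i$ equipped with a choice of open half-space $(F^i)^+$ of $F^i$ bounded by $F^{i-1}$ (equivalently an orientation of each $F^i$: $(v_1,\dots,v_{i-1},x)$ is positive iff $(v_1,\dots,v_{i-1})$ is positive in $F^{i-1}$ and $x\in(F^i)^+$). For an oriented $k$-dimensional subspace $W$ ($0\le k\le n-1$) and complete oriented flag $F$, let $d$ be the unique integer $1\le d\le k+1$ with $F^{d-1}\subseteq W$, $F^d\not\subseteq W$; then $[W,F]$ is $W+F^d$ oriented by $(w_1,\dots,w_k,x)$ with $(w_1,\dots,w_k)$ a positive basis of $W$ and $x\in(F^d)^+$. Inductively, $[F_1]=F_1^1$ (with its orientation) and $[F_1,\dots,F_k]=[[F_1,\dots,F_{k-1}],F_k]$, an oriented $k$-dimensional subspace. For an oriented $n$-dimensional space $U$, $\mathrm{Or}(U)\in\{\pm1\}$ is the sign of its orientation relative to the canonical one of $\mathbb{R}^n$; for vectors, $\mathrm{Or}(v_1,\dots,v_n)=\operatorname{sign}\det(v_1,\dots,v_n)$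 (zero if not a basis). *)

theory Defs
  imports "HOL-Analysis.Analysis"
begin

text \<open>A complete oriented flag in R^n (n = CARD('n)) is a pair (F, H):
  F i is the i-dimensional subspace F^i (0 \<le> i \<le> n), and H i (1 \<le> i \<le> n) is the chosen
  open half-space (F^i)^+ of F^i bounded by F^(i-1).\<close>

type_synonym 'n oflag = "(nat \<Rightarrow> (real^'n) set) \<times> (nat \<Rightarrow> (real^'n) set)"

definition is_oriented_flag :: "('n::finite) oflag \<Rightarrow> bool" where
  "is_oriented_flag FH \<longleftrightarrow>
     (let F = fst FH; H = snd FH; n = CARD('n) in
        F 0 = {0} \<and> F n = UNIV \<and>
        (\<forall>i\<le>n. subspace (F i) \<and> dim (F i) = i) \<and>
        (\<forall>i<n. F i \<subseteq> F (Suc i)) \<and>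
        (\<forall>i\<in>{1..n}. \<exists>v \<in> F i - F (i - 1).
            H i = {y + t *\<^sub>R v | y t. y \<in> F (i - 1) \<and> t > 0}))"

text \<open>An oriented k-dimensional subspace W is represented by the set of some of its positive
  ordered bases (lists of vectors); W = span of any of them.\<close>

definition flag_index :: "(real^('n::finite)) list \<Rightarrow> 'n oflag \<Rightarrow> nat" where
  "flag_index ws FH = (THE d. 1 \<le> d \<and> d \<le> length ws + 1 \<and>
       fst FH (d - 1) \<subseteq> span (set ws) \<and> \<not> fst FH d \<subseteq> span (set ws))"

definition bracket_step :: "(real^('n::finite)) list set \<Rightarrow> 'n oflag \<Rightarrow> (real^'n) list set" where
  "bracket_step B FH = {ws @ [x] | ws x. ws \<in> B \<and> x \<in> snd FH (flag_index ws FH)}"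

text \<open>[F_1,...,F_k]; note [F_1] = [{0}, F_1] = F_1^1 with its orientation.\<close>

definition bracket :: "('n::finite) oflag list \<Rightarrow> (real^'n) list set" where
  "bracket Fs = foldl bracket_step {[]} Fs"

definition coord_idx :: "'n::{finite,wellorder} \<Rightarrow> nat" where
  "coord_idx j = card {k. k < j}"

definition vec_or :: "(real^('n::{finite,wellorder})) list \<Rightarrow> real" where
  "vec_or vs = sgn (det (\<chi> i j. (vs ! coord_idx j) $ i))"

definition Or_space :: "(real^('n::{finite,wellorder})) list set \<Rightarrow> real" where
  "Or_space B = vec_or (SOME b. b \<in> B)"

definition omit2 :: "nat \<Rightarrow> nat \<Rightarrow> nat \<Rightarrow> nat list" where
  "omit2 i j m = filter (\<lambda>k. k \<noteq> i \<and> k \<noteq> j) [0..<Suc m]"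

end

theory Submission
  imports Defs
begin

text \<open>
  Each oriented flag \<open>F\<^sub>k\<close> comes with an adapted basis \<open>v\<^sub>0, \<dots>, v\<^sub>n\<^sub>-\<^sub>1\<close>
  (\<open>F\<^sup>m\<^sup>+\<^sup>1 = F\<^sup>m + \<real> v\<^sub>m\<close>, and \<open>v\<^sub>m\<close> points into \<open>(F\<^sup>m\<^sup>+\<^sup>1)\<^sup>+\<close>).  We take the points
  \<open>x\<^sub>k = \<Sum>\<^sub>m e^(w\<^sub>k m) v\<^sub>m\<close> for a small \<open>e > 0\<close>, with weights \<open>w\<^sub>0 \<gg> w\<^sub>1 \<gg> \<dots> \<gg> w\<^sub>n\<^sub>+\<^sub>1\<close>.

  (1) Every positive basis \<open>b\<close> of \<open>[F\<^sub>k\<^sub>1, \<dots>, F\<^sub>k\<^sub>n]\<close> is triangular with respect to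
      "pivot" vectors, the \<open>v\<^sub>\<mu>\<^sub>t\<close> of \<open>F\<^sub>k\<^sub>t\<close> (\<open>\<mu>\<^sub>t + 1\<close> being the index \<open>d\<close> of step \<open>t\<close>), with
      positive diagonal; so \<open>Or(b) = sgn det(pivots) \<noteq> 0\<close>.
  (2) Expanding \<open>det(x\<^sub>k\<^sub>1, \<dots>, x\<^sub>k\<^sub>n)\<close> multilinearly gives a polynomial in \<open>e\<close>.  A term
      choosing, at the first deviation from \<open>\<mu>\<close>, a smaller index vanishes (that vector lies
      in the span of earlier pivots); one choosing a larger index has higher degree because
      of the weights.  So the pivot term is the unique lowest one and fixes the sign.
  (3) Finitely many pairs \<open>i < j\<close> are handled by one sufficiently small \<open>e\<close>.
\<close>

lemma coord_idx_mono:
  fixes i j :: "'n::{finite,wellorder}"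
  assumes "i < j" shows "coord_idx i < coord_idx j"
proof -
  have "{k. k < i} \<subset> {k. k < j}" using assms by auto
  then show ?thesis unfolding coord_idx_def by (intro psubset_card_mono) auto
qed

lemma coord_idx_less_iff:
  fixes i j :: "'n::{finite,wellorder}"
  shows "coord_idx i < coord_idx j \<longleftrightarrow> i < j"
  by (metis coord_idx_mono less_asym neqE)

lemma coord_idx_lt: "coord_idx (j::'n::{finite,wellorder}) < CARD('n)"
proof -
  have "{k. k < j} \<subset> UNIV" by auto
  then show ?thesis unfolding coord_idx_def by (intro psubset_card_mono) auto
qed

lemma coord_idx_bij: "bij_betw coord_idx (UNIV :: 'n::{finite,wellorder} set) {..<CARD('n)}"
proof -
  have inj: "inj (coord_idx :: 'n \<Rightarrow> nat)"
    by (metis coord_idx_less_iff injI neqE order_less_irrefl)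
  then have "card (coord_idx ` (UNIV :: 'n set)) = card {..<CARD('n)}"
    by (simp add: card_image)
  moreover have "coord_idx ` (UNIV :: 'n set) \<subseteq> {..<CARD('n)}" using coord_idx_lt by auto
  ultimately show ?thesis
    using inj by (simp add: bij_betw_def card_subset_eq)
qed

lemma coord_idx_surj:
  assumes "t < CARD('n::{finite,wellorder})" shows "\<exists>j::'n. coord_idx j = t"
  using assms bij_betw_imp_surj_on[OF coord_idx_bij] by (metis imageE lessThan_iff)

lemma sum_coord_idx_below:
  fixes g :: "nat \<Rightarrow> 'b::comm_monoid_add"
  assumes "t \<le> CARD('n::{finite,wellorder})"
  shows "(\<Sum>j\<in>{j::'n. coord_idx j < t}. g (coord_idx j)) = (\<Sum>r<t. g r)"
proof -
  have "bij_betw coord_idx {j::'n. coord_idx j < t} {..<t}"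
    using assms by (intro bij_betw_subset[OF coord_idx_bij])
      (auto simp: image_iff, metis coord_idx_surj order_less_le_trans)
  then show ?thesis by (rule sum.reindex_bij_betw)
qed

lemma omit2_facts:
  assumes "i < j" "j \<le> m"
  shows "sorted_wrt (<) (omit2 i j m)" "set (omit2 i j m) = {..m} - {i,j}"
        "length (omit2 i j m) = m - 1"
proof -
  show "sorted_wrt (<) (omit2 i j m)" unfolding omit2_def
    by (intro sorted_wrt_filter) (simp del: upt_Suc)
  show set: "set (omit2 i j m) = {..m} - {i,j}" unfolding omit2_def by auto
  have "distinct (omit2 i j m)" unfolding omit2_def by simp
  then have "length (omit2 i j m) = card ({..m} - {i,j})" using set distinct_card by metis
  also have "\<dots> = Suc m - 2" using assms by (subst card_Diff_subset) auto
  finally show "length (omit2 i j m) = m - 1" by simp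
qed

lemma vec_or_rows:
  fixes vs :: "(real^('n::{finite,wellorder})) list"
  shows "vec_or vs = sgn (det (\<chi> (j::'n). vs ! coord_idx j))"
proof -
  have "(\<chi> i (j::'n). (vs ! coord_idx j) $ i) = transpose (\<chi> (j::'n). vs ! coord_idx j)"
    by (simp add: transpose_def vec_eq_iff)
  then show ?thesis unfolding vec_or_def by (simp only: det_transpose)
qed

lemma rows_of_list:
  fixes b :: "(real^('n::{finite,wellorder})) list"
  assumes "length b = CARD('n)"
  shows "rows (\<chi> (j::'n). b ! coord_idx j) = set b"
proof -
  have "rows (\<chi> (j::'n). b ! coord_idx j) = (\<lambda>j::'n. b ! coord_idx j) ` UNIV"
    by (auto simp: rows_def row_def vec_lambda_eta)
  also have "\<dots> = (!) b ` {..<CARD('n)}"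
    using bij_betw_imp_surj_on[OF coord_idx_bij] by (metis image_image)
  finally show ?thesis using assms by (auto simp: set_conv_nth)
qed

lemma det_row_in_span:
  fixes A :: "real^'n^'n"
  assumes "A$i \<in> span {A$j | j. j \<noteq> i}"
  shows "det A = 0"
proof -
  have row: "row k A = A $ k" for k by (simp add: row_def vec_eq_iff)
  have "- row i A \<in> vec.span {row j A | j. j \<noteq> i}"
    using assms unfolding span_vec_eq row by (rule span_neg)
  from det_row_span[OF this]
  have "det A = det (\<chi> k. if k = i then row i A + - row i A else row k A)" ..
  also have "\<dots> = 0"
    by (rule det_zero_row(1)[of i]) (simp add: row_def vec_eq_iff)
  finally show ?thesis .
qed

text \<open>Multilinearity of the determinant in the rows, for sums over an arbitrary finite
  index set (the library version only allows the row index type itself).\<close>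

lemma det_rows_sum_expand:
  fixes a :: "'n::finite \<Rightarrow> 'b \<Rightarrow> 'a::comm_ring_1^'n"
  assumes "finite S"
  shows "det (\<chi> i. \<Sum>s\<in>S. a i s) = (\<Sum>f \<in> UNIV \<rightarrow>\<^sub>E S. det (\<chi> i. a i (f i)))"
proof -
  have "det (\<chi> i. \<Sum>s\<in>S. a i s) =
      (\<Sum>p | p permutes UNIV. of_int (sign p) * (\<Sum>f \<in> UNIV \<rightarrow>\<^sub>E S. \<Prod>i\<in>UNIV. a i (f i) $ p i))"
    unfolding det_def using assms by (simp add: prod_sum_PiE)
  also have "\<dots> = (\<Sum>f \<in> UNIV \<rightarrow>\<^sub>E S. \<Sum>p | p permutes UNIV.
      of_int (sign p) * (\<Prod>i\<in>UNIV. a i (f i) $ p i))"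
    by (simp add: sum_distrib_left sum.swap[of _ "{p. p permutes UNIV}"])
  finally show ?thesis unfolding det_def by simp
qed

lemma leading_term_sign:
  fixes E :: "'f \<Rightarrow> nat" and c :: "'f \<Rightarrow> real"
  assumes S: "finite S" "g \<in> S" and cg: "c g \<noteq> 0"
    and higher: "\<And>f. f \<in> S \<Longrightarrow> f \<noteq> g \<Longrightarrow> c f \<noteq> 0 \<Longrightarrow> E g < E f"
  shows "eventually (\<lambda>e. sgn (\<Sum>f\<in>S. e ^ E f * c f) = sgn (c g)) (at_right 0)"
proof -
  define h where "h e = (\<Sum>f\<in>S. e ^ (E f - E g) * c f)" for e :: real
  have factor: "(\<Sum>f\<in>S. e ^ E f * c f) = e ^ E g * h e" for e
    unfolding h_def sum_distrib_left
  proof (intro sum.cong refl)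
    fix f assume "f \<in> S"
    then have "c f = 0 \<or> E g \<le> E f" using higher[of f] by fastforce
    then show "e ^ E f * c f = e ^ E g * (e ^ (E f - E g) * c f)"
      by (auto simp: power_add[symmetric])
  qed
  have "h 0 = c g + (\<Sum>f\<in>S - {g}. 0 ^ (E f - E g) * c f)"
    unfolding h_def using S by (simp add: sum.remove)
  also have "(\<Sum>f\<in>S - {g}. (0::real) ^ (E f - E g) * c f) = 0"
    using higher by (intro sum.neutral) fastforce
  finally have "h 0 = c g" by simp
  moreover have "(h \<longlongrightarrow> h 0) (at_right 0)" unfolding h_def by (intro tendsto_intros)
  ultimately have "eventually (\<lambda>e. dist (h e) (c g) < \<bar>c g\<bar>) (at_right 0)"
    using cg by (simp add: tendsto_iff)
  moreover have "eventually (\<lambda>e::real. 0 < e) (at_right 0)" by (rule eventually_at_right_less)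
  ultimately show ?thesis
  proof eventually_elim
    case (elim e)
    then have "sgn (h e) = sgn (c g)"
      by (auto simp: dist_real_def sgn_if abs_if split: if_splits)
    then show ?case using elim(2) by (simp add: factor sgn_mult)
  qed
qed

lemma weighted_sum_lex_less:
  fixes W f g :: "'n::{finite,wellorder} \<Rightarrow> nat"
  assumes eq: "\<forall>j<j0. f j = g j" and lt: "g j0 < f j0" and gb: "\<forall>j. g j \<le> CARD('n)"
    and W: "\<forall>j. j0 < j \<longrightarrow> W j * CARD('n) * CARD('n) < W j0" and W0: "W j0 > 0"
  shows "(\<Sum>j\<in>UNIV. W j * g j) < (\<Sum>j\<in>UNIV. W j * f j)"
proof -
  let ?n = "CARD('n)" and ?J = "{j. j0 < j}"
  have split: "(\<Sum>j\<in>UNIV. h j) = (\<Sum>j\<in>{j. j < j0}. h j) + h j0 + (\<Sum>j\<in>?J. h j)"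
    for h :: "'n \<Rightarrow> nat"
  proof -
    have U: "UNIV = {j. j < j0} \<union> ({j0} \<union> ?J)" by auto
    show ?thesis unfolding U by (subst sum.union_disjoint; auto simp: sum.union_disjoint)
  qed
  have "(\<Sum>j\<in>?J. W j * ?n) * ?n = (\<Sum>j\<in>?J. W j * ?n * ?n)" by (simp add: sum_distrib_right)
  also have "\<dots> \<le> (\<Sum>j\<in>?J. W j0 - 1)" using W by (intro sum_mono) fastforce
  also have "\<dots> \<le> ?n * (W j0 - 1)" by (simp add: card_mono mult_right_mono)
  finally have "(\<Sum>j\<in>?J. W j * ?n) \<le> W j0 - 1" by (simp add: mult.commute)
  moreover have "(\<Sum>j\<in>?J. W j * g j) \<le> (\<Sum>j\<in>?J. W j * ?n)" using gb by (intro sum_mono) simp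
  ultimately have J: "(\<Sum>j\<in>?J. W j * g j) < W j0" using W0 by linarith
  have A: "(\<Sum>j\<in>{j. j < j0}. W j * g j) = (\<Sum>j\<in>{j. j < j0}. W j * f j)"
    using eq by (intro sum.cong) auto
  have "W j0 * g j0 + W j0 \<le> W j0 * f j0"
    using lt by (metis add.commute mult.commute mult_Suc mult_le_mono1 Suc_leI)
  then show ?thesis using split[of "\<lambda>j. W j * g j"] split[of "\<lambda>j. W j * f j"] A J by linarith
qed

lemma oriented_flagD:
  assumes "is_oriented_flag (FH :: ('n::finite) oflag)"
  shows "fst FH 0 = {0}"
    "\<And>i. i \<le> CARD('n) \<Longrightarrow> subspace (fst FH i) \<and> dim (fst FH i) = i"
    "\<And>i. i < CARD('n) \<Longrightarrow> fst FH i \<subseteq> fst FH (Suc i)"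
    "\<And>i. i \<in> {1..CARD('n)} \<Longrightarrow> \<exists>v \<in> fst FH i - fst FH (i - 1).
            snd FH i = {y + t *\<^sub>R v | y t. y \<in> fst FH (i - 1) \<and> t > 0}"
  using assms unfolding is_oriented_flag_def Let_def by auto

lemma flag_mono:
  assumes "is_oriented_flag (FH :: ('n::finite) oflag)" "a \<le> b" "b \<le> CARD('n)"
  shows "fst FH a \<subseteq> fst FH b"
  using assms(2,3)
proof (induction b rule: dec_induct)
  case (step k) then show ?case using oriented_flagD(3)[OF assms(1), of k] by auto
qed simp

definition flag_vec :: "('n::finite) oflag \<Rightarrow> nat \<Rightarrow> real^'n" where
  "flag_vec FH m = (SOME v. v \<in> fst FH (Suc m) - fst FH m \<and>
      snd FH (Suc m) = {y + t *\<^sub>R v | y t. y \<in> fst FH m \<and> t > 0})"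

lemma flag_vec:
  assumes "is_oriented_flag (FH :: ('n::finite) oflag)" "m < CARD('n)"
  shows "flag_vec FH m \<in> fst FH (Suc m) - fst FH m"
    "snd FH (Suc m) = {y + t *\<^sub>R flag_vec FH m | y t. y \<in> fst FH m \<and> t > 0}"
proof -
  have "\<exists>v. v \<in> fst FH (Suc m) - fst FH m \<and>
      snd FH (Suc m) = {y + t *\<^sub>R v | y t. y \<in> fst FH m \<and> t > 0}"
    using oriented_flagD(4)[OF assms(1), of "Suc m"] assms(2) by auto
  from someI_ex[OF this] show "flag_vec FH m \<in> fst FH (Suc m) - fst FH m"
    "snd FH (Suc m) = {y + t *\<^sub>R flag_vec FH m | y t. y \<in> fst FH m \<and> t > 0}"
    unfolding flag_vec_def by auto
qed

lemma flag_vec_in_halfspace: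
  assumes "is_oriented_flag (FH :: ('n::finite) oflag)" "m < CARD('n)"
  shows "flag_vec FH m \<in> snd FH (Suc m)"
proof -
  have "0 \<in> fst FH m" using oriented_flagD(2)[OF assms(1), of m] assms(2) by (auto simp: subspace_0)
  then show ?thesis
    unfolding flag_vec(2)[OF assms] by (intro CollectI exI[of _ 0] exI[of _ 1]) simp
qed

text \<open>\<open>F\<^sup>m\<^sup>+\<^sup>1 = F\<^sup>m + \<real> v\<^sub>m\<close>, by a dimension count.\<close>

lemma flag_step_span:
  assumes FH: "is_oriented_flag (FH :: ('n::finite) oflag)" and m: "m < CARD('n)"
  shows "fst FH (Suc m) \<subseteq> span (insert (flag_vec FH m) (fst FH m))"
proof -
  let ?F = "fst FH" and ?v = "flag_vec FH m"
  have Fm: "subspace (?F m)" "dim (?F m) = m" using oriented_flagD(2)[OF FH, of m] m by auto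
  have FSm: "subspace (?F (Suc m))" "dim (?F (Suc m)) = Suc m"
    using oriented_flagD(2)[OF FH, of "Suc m"] m by auto
  have v: "?v \<in> ?F (Suc m)" "?v \<notin> ?F m" using flag_vec(1)[OF FH m] by auto
  have "insert ?v (?F m) \<subseteq> ?F (Suc m)" using v oriented_flagD(3)[OF FH m] by auto
  then have sub: "span (insert ?v (?F m)) \<subseteq> ?F (Suc m)" using span_minimal FSm(1) by blast
  have "?v \<notin> span (?F m)" using v(2) Fm(1) by (metis span_eq_iff)
  then have "dim (span (insert ?v (?F m))) = Suc m" using dim_insert[of ?v "?F m"] Fm by simp
  then have "span (insert ?v (?F m)) = ?F (Suc m)"
    using subspace_dim_equal[OF subspace_span FSm(1) sub] FSm by simp
  then show ?thesis by simp
qed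

lemma flag_index:
  assumes FH: "is_oriented_flag (FH :: ('n::finite) oflag)" and len: "length ws < CARD('n)"
  shows "1 \<le> flag_index ws FH" "flag_index ws FH \<le> length ws + 1"
    "fst FH (flag_index ws FH - 1) \<subseteq> span (set ws)" "\<not> fst FH (flag_index ws FH) \<subseteq> span (set ws)"
proof -
  let ?W = "span (set ws)" and ?F = "fst FH"
  let ?P = "\<lambda>d. 1 \<le> d \<and> d \<le> length ws + 1 \<and> ?F (d - 1) \<subseteq> ?W \<and> \<not> ?F d \<subseteq> ?W"
  define d where "d = (LEAST d. \<not> ?F d \<subseteq> ?W)"
  have top: "\<not> ?F (length ws + 1) \<subseteq> ?W"
  proof
    assume "?F (length ws + 1) \<subseteq> ?W"
    then have "dim (?F (length ws + 1)) \<le> dim ?W" by (rule dim_subset)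
    also have "\<dots> \<le> length ws"
      using dim_le_card[of ?W "set ws"] card_length[of ws] span_superset by auto
    finally show False using oriented_flagD(2)[OF FH, of "length ws + 1"] len by auto
  qed
  have d_le: "d \<le> length ws + 1" unfolding d_def using top by (rule Least_le)
  have d: "\<not> ?F d \<subseteq> ?W" unfolding d_def using top by (rule LeastI)
  then have "d \<noteq> 0" using oriented_flagD(1)[OF FH] span_zero by auto
  moreover have "?F (d - 1) \<subseteq> ?W"
    using not_less_Least[of "d - 1" "\<lambda>d. \<not> ?F d \<subseteq> ?W"] \<open>d \<noteq> 0\<close> unfolding d_def by auto
  ultimately have Pd: "?P d" using d_le d by simp
  have unique: "d' = d" if "?P d'" for d'
  proof (rule ccontr)
    assume "d' \<noteq> d"
    then consider "d' \<le> d - 1" | "d \<le> d' - 1" by linarith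
    then show False
    proof cases
      case 1
      have "?F d' \<subseteq> ?F (d - 1)" using flag_mono[OF FH 1] Pd len by linarith
      then show False using Pd that by blast
    next
      case 2
      have "?F d \<subseteq> ?F (d' - 1)" using flag_mono[OF FH 2] that len by linarith
      then show False using Pd that by blast
    qed
  qed
  have "flag_index ws FH = d" unfolding flag_index_def using Pd unique by (rule the_equality)
  then show "1 \<le> flag_index ws FH" "flag_index ws FH \<le> length ws + 1"
    "?F (flag_index ws FH - 1) \<subseteq> ?W" "\<not> ?F (flag_index ws FH) \<subseteq> ?W"
    using Pd by auto
qed

lemma bracket_step_vector:
  assumes FH: "is_oriented_flag (FH :: ('n::finite) oflag)" and len: "length ws < CARD('n)"
    and x: "x \<in> snd FH (flag_index ws FH)"
  defines "m \<equiv> flag_index ws FH - 1"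
  shows "m < CARD('n)" "x \<notin> span (set ws)" "\<exists>s>0. x - s *\<^sub>R flag_vec FH m \<in> span (set ws)"
    "\<And>m'. m' < m \<Longrightarrow> flag_vec FH m' \<in> span (set ws)"
proof -
  let ?W = "span (set ws)" and ?F = "fst FH" and ?v = "flag_vec FH m"
  note d = flag_index[OF FH len]
  have d_eq: "flag_index ws FH = Suc m" using d(1) unfolding m_def by simp
  show m: "m < CARD('n)" using d(1,2) len unfolding m_def by linarith
  have Fm: "?F m \<subseteq> ?W" using d(3) unfolding m_def by simp
  obtain y t where yt: "x = y + t *\<^sub>R ?v" "y \<in> ?F m" "t > 0"
    using x flag_vec(2)[OF FH m] d_eq by auto
  show "\<exists>s>0. x - s *\<^sub>R ?v \<in> ?W" using yt Fm by (intro exI[of _ t]) auto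
  show "x \<notin> ?W"
  proof
    assume "x \<in> ?W"
    then have "(1/t) *\<^sub>R (x - y) \<in> ?W" using yt Fm by (intro span_scale span_diff) auto
    moreover have "(1/t) *\<^sub>R (x - y) = ?v" using yt by auto
    ultimately have "insert ?v (?F m) \<subseteq> ?W" using Fm by auto
    then have "span (insert ?v (?F m)) \<subseteq> ?W" by (simp add: span_minimal)
    then show False using flag_step_span[OF FH m] d(4) d_eq by auto
  qed
  show "flag_vec FH m' \<in> ?W" if "m' < m" for m'
  proof -
    have "flag_vec FH m' \<in> ?F (Suc m')" using flag_vec(1)[OF FH, of m'] that m by auto
    also have "\<dots> \<subseteq> ?F m" using flag_mono[OF FH, of "Suc m'" m] that m by auto
    finally show ?thesis using Fm by auto
  qed
qed

text \<open>Invariant of the vectors of a positive basis \<open>b\<close> of \<open>[F\<^sub>k\<^sub>1, \<dots>, F\<^sub>k\<^sub>r]\<close> (for \<open>ks = [k\<^sub>1, \<dots>, k\<^sub>r]\<close>):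
  the \<open>t\<close>-th vector lies outside the span of its predecessors and agrees, modulo that span
  and up to a positive factor, with the adapted vector \<open>v\<^sub>\<mu>\<^sub>t\<close> of \<open>F\<^sub>k\<^sub>t\<close>, whose smaller
  adapted vectors all lie in that span (\<open>\<mu>\<^sub>t + 1\<close> is the index \<open>d\<close> of the \<open>t\<close>-th step).\<close>

definition adapted_basis ::
    "(nat \<Rightarrow> ('n::finite) oflag) \<Rightarrow> nat list \<Rightarrow> (real^'n) list \<Rightarrow> nat list \<Rightarrow> bool" where
  "adapted_basis Fl ks b \<mu> \<longleftrightarrow> length b = length ks \<and> length \<mu> = length ks \<and>
     (\<forall>t<length ks. \<mu>!t < CARD('n) \<and>
        (\<forall>m<\<mu>!t. flag_vec (Fl (ks!t)) m \<in> span (set (take t b))) \<and>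
        (\<exists>s>0. b!t - s *\<^sub>R flag_vec (Fl (ks!t)) (\<mu>!t) \<in> span (set (take t b))) \<and>
        b!t \<notin> span (set (take t b)))"

lemma adapted_basis_snoc:
  assumes "adapted_basis Fl ks b \<mu>" "m < CARD('n)" "x \<notin> span (set b)"
    and "\<exists>s>0. x - s *\<^sub>R flag_vec (Fl k) m \<in> span (set b)"
    and "\<And>m'. m' < m \<Longrightarrow> flag_vec (Fl k) m' \<in> span (set b)"
  shows "adapted_basis (Fl :: nat \<Rightarrow> ('n::finite) oflag) (ks @ [k]) (b @ [x]) (\<mu> @ [m])"
proof -
  have len: "length b = length ks" "length \<mu> = length ks"
    using assms(1) unfolding adapted_basis_def by auto
  have "(\<mu> @ [m])!t < CARD('n) \<and>
      (\<forall>m'<(\<mu> @ [m])!t. flag_vec (Fl ((ks @ [k])!t)) m' \<in> span (set (take t (b @ [x])))) \<and>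
      (\<exists>s>0. (b @ [x])!t - s *\<^sub>R flag_vec (Fl ((ks @ [k])!t)) ((\<mu> @ [m])!t)
          \<in> span (set (take t (b @ [x])))) \<and>
      (b @ [x])!t \<notin> span (set (take t (b @ [x])))" if "t < length (ks @ [k])" for t
  proof (cases "t < length ks")
    case True
    then show ?thesis using assms(1) len unfolding adapted_basis_def by (simp add: nth_append)
  next
    case False
    then have "t = length ks" using that by simp
    then show ?thesis using assms(2-) len by (simp add: nth_append)
  qed
  then show ?thesis using len unfolding adapted_basis_def by simp
qed

lemma bracket_adapted:
  fixes Fl :: "nat \<Rightarrow> ('n::finite) oflag"
  assumes "\<forall>k\<in>set ks. is_oriented_flag (Fl k)" "length ks \<le> CARD('n)"
  shows "bracket (map Fl ks) \<noteq> {} \<and> (\<forall>b \<in> bracket (map Fl ks). \<exists>\<mu>. adapted_basis Fl ks b \<mu>)"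
  using assms
proof (induction ks rule: rev_induct)
  case Nil
  then show ?case by (auto simp: bracket_def adapted_basis_def)
next
  case (snoc k ks)
  have FH: "is_oriented_flag (Fl k)" and len: "length ks < CARD('n)" using snoc.prems by auto
  have IH: "bracket (map Fl ks) \<noteq> {}" "\<forall>b \<in> bracket (map Fl ks). \<exists>\<mu>. adapted_basis Fl ks b \<mu>"
    using snoc by auto
  have step: "bracket (map Fl (ks @ [k])) = bracket_step (bracket (map Fl ks)) (Fl k)"
    by (simp add: bracket_def)
  have len_b: "length b < CARD('n)" if "b \<in> bracket (map Fl ks)" for b
    using IH(2) that len by (auto simp: adapted_basis_def)
  obtain b where b: "b \<in> bracket (map Fl ks)" using IH(1) by auto
  define d where "d = flag_index b (Fl k)"
  have "1 \<le> d" "d \<le> CARD('n)"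
    using flag_index(1,2)[OF FH len_b[OF b]] len_b[OF b] unfolding d_def by auto
  then have "flag_vec (Fl k) (d - 1) \<in> snd (Fl k) d"
    using flag_vec_in_halfspace[OF FH, of "d - 1"] by simp
  then have nonempty: "bracket (map Fl (ks @ [k])) \<noteq> {}"
    unfolding step bracket_step_def d_def using b by blast
  have "\<exists>\<mu>. adapted_basis Fl (ks @ [k]) b' \<mu>" if mem: "b' \<in> bracket (map Fl (ks @ [k]))" for b'
  proof -
    obtain b x where b': "b' = b @ [x]" and b: "b \<in> bracket (map Fl ks)"
      and x: "x \<in> snd (Fl k) (flag_index b (Fl k))"
      using mem unfolding step bracket_step_def by blast
    obtain \<mu> where \<mu>: "adapted_basis Fl ks b \<mu>" using IH(2) b by auto
    show ?thesis
      unfolding b' using adapted_basis_snoc[OF \<mu> bracket_step_vector[OF FH len_b[OF b] x]] ..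
  qed
  with nonempty show ?case by blast
qed

lemma span_insert_swap:
  assumes "y - s *\<^sub>R v \<in> span A" "s \<noteq> 0" "span A = span A'"
  shows "span (insert y A) = span (insert v A')"
proof -
  have A: "A \<subseteq> span (insert v A')" and A': "A' \<subseteq> span (insert y A)"
    using assms(3) span_superset span_mono by (metis subset_insertI order_trans)+
  have "y - s *\<^sub>R v \<in> span (insert v A')" using assms(1) span_mono[OF A] by (auto simp: span_span)
  then have "s *\<^sub>R v + (y - s *\<^sub>R v) \<in> span (insert v A')"
    by (intro span_add span_scale) (auto intro: span_base)
  then have y: "y \<in> span (insert v A')" by simp
  have "y - s *\<^sub>R v \<in> span (insert y A)" using assms(1) span_mono[of A "insert y A"] by auto
  then have "(1/s) *\<^sub>R (y - (y - s *\<^sub>R v)) \<in> span (insert y A)"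
    by (meson span_scale span_diff span_base insertI1)
  moreover have "(1/s) *\<^sub>R (y - (y - s *\<^sub>R v)) = v" using assms(2) by simp
  ultimately have v: "v \<in> span (insert y A)" by metis
  show ?thesis unfolding span_eq using y v A A' by auto
qed

lemma adapted_basis_span:
  assumes ab: "adapted_basis Fl ks b \<mu>" and t: "t \<le> length ks"
  shows "span (set (take t b)) = span ((\<lambda>s. flag_vec (Fl (ks!s)) (\<mu>!s)) ` {..<t})"
  using t
proof (induction t)
  case (Suc t)
  have lt: "t < length ks" using Suc by simp
  then have "take (Suc t) b = take t b @ [b!t]"
    using ab by (simp add: adapted_basis_def take_Suc_conv_app_nth)
  moreover obtain s where "s > 0" "b!t - s *\<^sub>R flag_vec (Fl (ks!t)) (\<mu>!t) \<in> span (set (take t b))"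
    using ab lt unfolding adapted_basis_def by blast
  ultimately show ?case
    using span_insert_swap[of "b!t" s _ "set (take t b)"] Suc.IH lt by (simp add: lessThan_Suc)
qed simp

lemma adapted_basis_dim:
  assumes ab: "adapted_basis Fl ks b \<mu>" and t: "t \<le> length ks"
  shows "dim (set (take t b)) = t"
  using t
proof (induction t)
  case (Suc t)
  have lt: "t < length ks" using Suc by simp
  then have "take (Suc t) b = take t b @ [b!t]"
    using ab by (simp add: adapted_basis_def take_Suc_conv_app_nth)
  moreover have "b!t \<notin> span (set (take t b))" using ab lt unfolding adapted_basis_def by blast
  ultimately show ?case using Suc dim_insert[of "b!t" "set (take t b)"] lt by simp
qed simp

lemma span_image_repr:
  assumes "finite A" "x \<in> span (f ` A)"
  shows "\<exists>c. x = (\<Sum>a\<in>A. c a *\<^sub>R f a)"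
  using assms
proof (induction A arbitrary: x rule: finite_induct)
  case (insert a A)
  obtain k where "x - k *\<^sub>R f a \<in> span (f ` A)" using insert.prems by (auto simp: span_insert)
  then obtain c where c: "x - k *\<^sub>R f a = (\<Sum>a\<in>A. c a *\<^sub>R f a)" using insert.IH by blast
  have "(\<Sum>b\<in>A. (c(a:=k)) b *\<^sub>R f b) = (\<Sum>b\<in>A. c b *\<^sub>R f b)"
    using insert.hyps by (intro sum.cong) auto
  then have "x = (\<Sum>b\<in>insert a A. (c(a := k)) b *\<^sub>R f b)"
    using insert.hyps c by (simp add: algebra_simps)
  then show ?case by blast
qed simp

lemma det_triangular_change:
  fixes b V :: "nat \<Rightarrow> real^('n::{finite,wellorder})"
  assumes "\<And>t. t < CARD('n) \<Longrightarrow> \<exists>s>0. b t - s *\<^sub>R V t \<in> span (V ` {..<t})"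
  shows "\<exists>c>0. det (\<chi> j::'n. b (coord_idx j)) = c * det (\<chi> j::'n. V (coord_idx j))"
proof -
  have "\<exists>p. fst p > (0::real) \<and> b t = fst p *\<^sub>R V t + (\<Sum>r<t. snd p r *\<^sub>R V r)"
    if t: "t < CARD('n)" for t
  proof -
    obtain s where s: "s > 0" "b t - s *\<^sub>R V t \<in> span (V ` {..<t})" using assms t by blast
    then obtain c where "b t - s *\<^sub>R V t = (\<Sum>r<t. c r *\<^sub>R V r)"
      using span_image_repr[of "{..<t}"] by blast
    then show ?thesis using s(1) by (intro exI[of _ "(s, c)"]) (simp add: algebra_simps)
  qed
  then obtain P where P: "\<And>t. t < CARD('n) \<Longrightarrow> fst (P t) > (0::real) \<and>
      b t = fst (P t) *\<^sub>R V t + (\<Sum>r<t. snd (P t) r *\<^sub>R V r)"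
    by metis
  define T where "T = (\<chi> (j::'n) (j'::'n). if j' = j then fst (P (coord_idx j))
      else if coord_idx j' < coord_idx j then snd (P (coord_idx j)) (coord_idx j') else 0)"
  let ?B = "\<chi> j::'n. b (coord_idx j)" and ?V = "\<chi> j::'n. V (coord_idx j)"
  have "?B = T ** ?V"
  proof (subst matrix_mul_sum_alt, rule vec_eq_iff[THEN iffD2], intro allI)
    fix j :: 'n
    let ?c = "coord_idx j"
    have "(\<Sum>k\<in>UNIV. T $ j $ k *s ?V $ k) =
      (\<Sum>k\<in>UNIV. (if k = j then fst (P ?c) *\<^sub>R V ?c else 0) +
          (if coord_idx k < ?c then snd (P ?c) (coord_idx k) *\<^sub>R V (coord_idx k) else 0))"
      by (intro sum.cong) (auto simp: T_def scalar_mult_eq_scaleR)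
    also have "\<dots> = fst (P ?c) *\<^sub>R V ?c +
        (\<Sum>k\<in>{k::'n. coord_idx k < ?c}. snd (P ?c) (coord_idx k) *\<^sub>R V (coord_idx k))"
      by (simp add: sum.distrib sum.If_cases)
    also have "\<dots> = b ?c"
      using sum_coord_idx_below[OF less_imp_le[OF coord_idx_lt[of j]]] P[OF coord_idx_lt[of j]]
      by simp
    finally show "?B $ j = (\<chi> i. \<Sum>k\<in>UNIV. T $ i $ k *s ?V $ k) $ j" by simp
  qed
  then have "det ?B = det T * det ?V" by (simp add: det_mul)
  moreover have "det T = (\<Prod>j\<in>UNIV. T$j$j)"
    by (rule det_lowerdiagonal) (auto simp: T_def coord_idx_less_iff dest: less_asym)
  then have "det T > 0"
    by (simp add: T_def) (use P coord_idx_lt in \<open>blast intro: prod_pos\<close>)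
  ultimately show ?thesis by blast
qed

lemma adapted_basis_orientation:
  fixes Fl :: "nat \<Rightarrow> ('n::{finite,wellorder}) oflag"
  assumes ab: "adapted_basis Fl ks b \<mu>" and len: "length ks = CARD('n)"
  defines "V \<equiv> \<lambda>j::'n. flag_vec (Fl (ks ! coord_idx j)) (\<mu> ! coord_idx j)"
  shows "det (\<chi> j. V j) \<noteq> 0" "vec_or b = sgn (det (\<chi> j. V j))"
proof -
  have lb: "length b = CARD('n)" using ab len by (simp add: adapted_basis_def)
  have pivot: "\<exists>s>0. b!t - s *\<^sub>R flag_vec (Fl (ks!t)) (\<mu>!t)
      \<in> span ((\<lambda>s. flag_vec (Fl (ks!s)) (\<mu>!s)) ` {..<t})" if t: "t < CARD('n)" for t
  proof -
    have "\<exists>s>0. b!t - s *\<^sub>R flag_vec (Fl (ks!t)) (\<mu>!t) \<in> span (set (take t b))"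
      using ab t len unfolding adapted_basis_def by auto
    then show ?thesis using adapted_basis_span[OF ab, of t] t len by simp
  qed
  obtain c where c: "c > 0" "det (\<chi> j. b ! coord_idx j) = c * det (\<chi> j. V j)"
    using det_triangular_change[of "(!) b", OF pivot] unfolding V_def by blast
  have "rank (\<chi> j::'n. b ! coord_idx j) = CARD('n)"
    using adapted_basis_dim[OF ab, of "CARD('n)"] len lb
    by (simp add: row_rank_def rows_of_list)
  then have "det (\<chi> j::'n. b ! coord_idx j) \<noteq> 0" by (simp add: det_eq_0_rank)
  with c show "det (\<chi> j. V j) \<noteq> 0" "vec_or b = sgn (det (\<chi> j. V j))"
    by (auto simp: vec_or_rows sgn_mult)
qed

text \<open>The generic point attached to flag \<open>F\<^sub>k\<close> is \<open>x\<^sub>k(e) = \<Sum>\<^sub>m e^(w\<^sub>k m) v\<^sub>m\<close> for the adapted vectors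
  \<open>v\<^sub>m\<close> of \<open>F\<^sub>k\<close>, with weights \<open>w\<^sub>k\<close> decreasing so fast in \<open>k\<close> that, in every determinant
  of such points, later flags can never compensate a higher power of \<open>e\<close> from earlier ones.\<close>

definition weight :: "nat \<Rightarrow> nat \<Rightarrow> nat" where
  "weight n k = (n * n + 1) ^ (n + 1 - k)"

definition generic_point :: "(nat \<Rightarrow> ('n::finite) oflag) \<Rightarrow> real \<Rightarrow> nat \<Rightarrow> real^'n" where
  "generic_point Fl e k = (\<Sum>m<CARD('n). (e ^ (weight CARD('n) k * m)) *\<^sub>R flag_vec (Fl k) m)"

lemma weight_gap:
  assumes "k0 < k" "k \<le> n + 1"
  shows "weight n k * n * n < weight n k0"
proof -
  have "weight n k * n * n < weight n k * (n * n + 1)" unfolding weight_def by simp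
  also have "\<dots> = (n * n + 1) ^ (n + 1 - k + 1)" unfolding weight_def by simp
  also have "\<dots> \<le> weight n k0" unfolding weight_def using assms by (intro power_increasing) auto
  finally show ?thesis .
qed

lemma generic_det_expansion:
  fixes Fl :: "nat \<Rightarrow> ('n::{finite,wellorder}) oflag"
  assumes len: "length ks = CARD('n)"
  shows "det (\<chi> j. map (generic_point Fl e) ks ! coord_idx j) =
    (\<Sum>f \<in> UNIV \<rightarrow>\<^sub>E {..<CARD('n)}. e ^ (\<Sum>j\<in>UNIV. weight CARD('n) (ks ! coord_idx j) * f j)
        * det (\<chi> j. flag_vec (Fl (ks ! coord_idx j)) (f j)))"
proof -
  let ?W = "\<lambda>j::'n. weight CARD('n) (ks ! coord_idx j)"
  let ?u = "\<lambda>(j::'n) m. flag_vec (Fl (ks ! coord_idx j)) m"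
  have "(\<chi> j. map (generic_point Fl e) ks ! coord_idx j) =
      (\<chi> j. \<Sum>m<CARD('n). (e ^ (?W j * m)) *\<^sub>R ?u j m)"
    using coord_idx_lt[where 'n='n] len by (simp add: generic_point_def)
  then have "det (\<chi> j. map (generic_point Fl e) ks ! coord_idx j) =
      (\<Sum>f \<in> UNIV \<rightarrow>\<^sub>E {..<CARD('n)}. det (\<chi> j. (e ^ (?W j * f j)) *\<^sub>R ?u j (f j)))"
    by (simp add: det_rows_sum_expand)
  also have "\<dots> = (\<Sum>f \<in> UNIV \<rightarrow>\<^sub>E {..<CARD('n)}. e ^ (\<Sum>j\<in>UNIV. ?W j * f j) * det (\<chi> j. ?u j (f j)))"
    using det_rows_mul[of "\<lambda>j. e ^ (?W j * _ j)"]
    by (simp add: scalar_mult_eq_scaleR power_sum)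
  finally show ?thesis .
qed

text \<open>In that expansion, a choice that agrees with the pivot indices \<open>\<mu>\<close> on the first rows
  and then picks a smaller index contributes nothing: that vector lies in the span of the
  preceding pivot vectors.\<close>

lemma lower_choice_det_zero:
  fixes Fl :: "nat \<Rightarrow> ('n::{finite,wellorder}) oflag"
  assumes ab: "adapted_basis Fl ks b \<mu>" and len: "length ks = CARD('n)"
    and agree: "\<forall>j<j0. f j = \<mu> ! coord_idx j" and lower: "f j0 < \<mu> ! coord_idx j0"
  shows "det (\<chi> j. flag_vec (Fl (ks ! coord_idx j)) (f j)) = 0"
proof (rule det_row_in_span)
  let ?u = "\<lambda>(j::'n) m. flag_vec (Fl (ks ! coord_idx j)) m"
  let ?V = "\<lambda>s. flag_vec (Fl (ks!s)) (\<mu>!s)" and ?t0 = "coord_idx j0"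
  have t0: "?t0 < length ks" using coord_idx_lt len by simp
  have "?u j0 (f j0) \<in> span (set (take ?t0 b))"
    using ab t0 lower unfolding adapted_basis_def by blast
  also have "\<dots> = span (?V ` {..<?t0})" using adapted_basis_span[OF ab] t0 by simp
  also have "\<dots> \<subseteq> span {(\<chi> j. ?u j (f j)) $ j | j. j \<noteq> j0}"
  proof (rule span_mono, rule subsetI)
    fix v assume "v \<in> ?V ` {..<?t0}"
    then obtain s where s: "s < ?t0" "v = ?V s" by auto
    then obtain j :: 'n where j: "coord_idx j = s"
      using coord_idx_surj coord_idx_lt[of j0] by (meson order.strict_trans)
    then have "j < j0" using s coord_idx_less_iff by metis
    then show "v \<in> {(\<chi> j. ?u j (f j)) $ j | j. j \<noteq> j0}" using agree s j by force
  qed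
  finally show "(\<chi> j. ?u j (f j)) $ j0 \<in> span {(\<chi> j. ?u j (f j)) $ j | j. j \<noteq> j0}" by simp
qed

text \<open>For \<open>n\<close> flags \<open>F\<^sub>k\<^sub>1, \<dots>, F\<^sub>k\<^sub>n\<close> with \<open>k\<^sub>1 < \<dots> < k\<^sub>n \<le> n + 1\<close>, the generic points have, for
  all small \<open>e > 0\<close>, the orientation of any adapted basis \<open>b\<close> of \<open>[F\<^sub>k\<^sub>1, \<dots>, F\<^sub>k\<^sub>n]\<close>: the
  pivot choice \<open>\<mu>\<close> is the unique lowest-order term of the determinant.\<close>

lemma generic_point_orientation:
  fixes Fl :: "nat \<Rightarrow> ('n::{finite,wellorder}) oflag"
  assumes ab: "adapted_basis Fl ks b \<mu>" and len: "length ks = CARD('n)"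
    and sorted: "sorted_wrt (<) ks" and bound: "\<forall>k\<in>set ks. k \<le> CARD('n) + 1"
  shows "eventually (\<lambda>e. vec_or (map (generic_point Fl e) ks) = vec_or b) (at_right 0)"
proof -
  let ?n = "CARD('n)" and ?S = "UNIV \<rightarrow>\<^sub>E {..<CARD('n)}"
  define W where "W j = weight ?n (ks ! coord_idx j)" for j :: 'n
  define E where "E f = (\<Sum>j\<in>UNIV. W j * f j)" for f :: "'n \<Rightarrow> nat"
  define D where "D f = det (\<chi> j. flag_vec (Fl (ks ! coord_idx j)) (f j))" for f :: "'n \<Rightarrow> nat"
  define g where "g j = \<mu> ! coord_idx j" for j :: 'n
  have Dg: "D g \<noteq> 0" and sgn_b: "vec_or b = sgn (D g)"
    using adapted_basis_orientation[OF ab len] by (simp_all add: D_def g_def)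
  have g_less: "g j < ?n" for j using ab len coord_idx_lt unfolding adapted_basis_def g_def by auto
  then have gS: "g \<in> ?S" by auto
  have higher: "E g < E f" if f: "f \<in> ?S" "f \<noteq> g" "D f \<noteq> 0" for f
  proof -
    have ex: "\<exists>j. f j \<noteq> g j" using f(2) by auto
    define j0 where "j0 = (LEAST j. f j \<noteq> g j)"
    have agree: "\<forall>j<j0. f j = g j" using not_less_Least unfolding j0_def by blast
    have "f j0 \<noteq> g j0" using LeastI_ex[OF ex] unfolding j0_def .
    moreover have "\<not> f j0 < g j0"
      using lower_choice_det_zero[OF ab len, of j0 f] agree f(3) by (auto simp: D_def g_def)
    ultimately have "g j0 < f j0" by simp
    moreover have "\<forall>j. g j \<le> ?n" using g_less by (simp add: less_imp_le)
    moreover have "\<forall>j. j0 < j \<longrightarrow> W j * ?n * ?n < W j0"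
    proof (intro allI impI)
      fix j :: 'n assume "j0 < j"
      then have "ks ! coord_idx j0 < ks ! coord_idx j"
        using sorted_wrt_nth_less[OF sorted] coord_idx_lt[of j] len coord_idx_less_iff by metis
      moreover have "ks ! coord_idx j \<le> ?n + 1" using bound coord_idx_lt[of j] len by simp
      ultimately show "W j * ?n * ?n < W j0" unfolding W_def by (rule weight_gap)
    qed
    moreover have "W j0 > 0" by (simp add: W_def weight_def)
    ultimately show "E g < E f" unfolding E_def using agree by (intro weighted_sum_lex_less)
  qed
  have "eventually (\<lambda>e. sgn (\<Sum>f\<in>?S. e ^ E f * D f) = sgn (D g)) (at_right 0)"
    using leading_term_sign[of ?S g D E] gS Dg higher by (simp add: finite_PiE)
  then show ?thesis
    using generic_det_expansion[OF len] sgn_b unfolding vec_or_rows by (simp add: E_def W_def D_def)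
qed

lemma Or_space_bracket_eventually:
  fixes Fl :: "nat \<Rightarrow> ('n::{finite,wellorder}) oflag"
  assumes flags: "\<forall>k\<in>set ks. is_oriented_flag (Fl k)" and len: "length ks = CARD('n)"
    and sorted: "sorted_wrt (<) ks" and bound: "\<forall>k\<in>set ks. k \<le> CARD('n) + 1"
  shows "eventually (\<lambda>e. Or_space (bracket (map Fl ks)) = vec_or (map (generic_point Fl e) ks))
           (at_right 0)"
proof -
  note adapted = bracket_adapted[OF flags, unfolded len, OF order_refl]
  define b where "b = (SOME b. b \<in> bracket (map Fl ks))"
  have "b \<in> bracket (map Fl ks)" unfolding b_def using adapted some_in_eq by blast
  then obtain \<mu> where ab: "adapted_basis Fl ks b \<mu>" using adapted by blast
  have "Or_space (bracket (map Fl ks)) = vec_or b" unfolding Or_space_def b_def ..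
  with generic_point_orientation[OF ab len sorted bound] show ?thesis by (simp add: eq_commute)
qed

theorem proposition4p4:
  fixes Fl :: "nat \<Rightarrow> (nat \<Rightarrow> (real, 'n::{finite,wellorder}) vec set) \<times> (nat \<Rightarrow> (real, 'n) vec set)"
  assumes "\<forall>k \<le> CARD('n) + 1. is_oriented_flag (Fl k)"
  shows "\<exists>x :: nat \<Rightarrow> (real, 'n) vec. \<forall>i j. i < j \<and> j \<le> CARD('n) + 1 \<longrightarrow>
           Or_space (bracket (map Fl (omit2 i j (CARD('n) + 1))))
             = vec_or (map x (omit2 i j (CARD('n) + 1)))"
proof -
  let ?N = "CARD('n) + 1"
  let ?holds = "\<lambda>e (i, j). Or_space (bracket (map Fl (omit2 i j ?N)))
                  = vec_or (map (generic_point Fl e) (omit2 i j ?N))"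
  define P where "P = {(i, j). i < j \<and> j \<le> ?N}"
  have "finite P" by (rule finite_subset[of _ "{..?N} \<times> {..?N}"]) (auto simp: P_def)
  moreover have "\<forall>p\<in>P. eventually (\<lambda>e. ?holds e p) (at_right 0)"
  proof
    fix p assume "p \<in> P"
    then obtain i j where p: "p = (i, j)" and ij: "i < j" "j \<le> ?N" by (auto simp: P_def)
    note omit = omit2_facts[OF ij]
    have "\<forall>k\<in>set (omit2 i j ?N). is_oriented_flag (Fl k)" using omit(2) assms by auto
    from Or_space_bracket_eventually[OF this _ omit(1)] omit(2,3)
    show "eventually (\<lambda>e. ?holds e p) (at_right 0)" unfolding p by simp
  qed
  ultimately have "eventually (\<lambda>e. \<forall>p\<in>P. ?holds e p) (at_right 0)"
    by (rule eventually_ball_finite)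
  then obtain e where "\<forall>p\<in>P. ?holds e p"
    using eventually_happens trivial_limit_at_right_real by blast
  then show ?thesis by (intro exI[of _ "generic_point Fl e"]) (auto simp: P_def)
qed

end
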